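(* Let $\mathbf{T}\subset\mathbb{S}^3$ be a $\mathbb{Z}_2$-symmetric spherical tetrahedron with dihedral angles $A$, $B=E$, $C=F$, $D$ and edge lengths $l_A$, $l_B=l_E$, $l_C=l_F$, $l_D$. Then: (i) $l_A=l_D$ if and only if $A=D$; (ii) $l_A>l_D$ if and only if $A<D$.
   Context: A spherical tetrahedron $\mathbf{T}\subset\mathbb{S}^3=\{x\in\mathbb{R}^4:\langle x,x\rangle=1\}$ is the intersection of $\mathbb{S}^3$ with the cone $\{\sum_{i=0}^3\lambda_i\mathrm{p}_i:\lambda_i\ge 0\}$ over four linearly independent unit vectors $\mathrm{p}_0,\dots,\mathrm{p}_3$ (its vertices). Edge lengths $l_{ij}\in[0,\pi]$ are given by $\cos l_{ij}=\langle \mathrm{p}_i,\mathrm{p}_j\rangle$; if $\mathrm{v}_i$ is the outer unit normal to the face opposite $\mathrm{p}_i$, the dihedral angle $\alpha_{ij}\in[0,\pi]$ between faces $i$ and $j$ satisfies $\cos\alpha_{ij}=-\langle \mathrm{v}_i,\mathrm{v}_j\rangle$. Notation: $l_A=l_{01}$, $l_B=l_{02}$, $l_C=l_{03}$, $l_D=l_{23}$, $l_E=l_{13}$, $l_F=l_{12}$, and $A,B,C,D,E,F$ denote the dihedral angles along the edges of lengths $l_A,\dots,l_F$ respectively. $\mathbf{T}$ is called $\mathbb{Z}_2$-symmetric if it is invariant under the rotation through angle $\pi$ about the axis through the midpoints of the edges $\mathrm{p}_0\mathrm{p}_1$ and $\mathrm{p}_2\mathrm{p}_3$; in that case $l_B=l_E$,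 $l_C=l_F$, $B=E$, $C=F$. *)

theory Defs
  imports "HOL-Analysis.Analysis"
begin

definition sph_tetra_vertices :: "(nat \<Rightarrow> real^4) \<Rightarrow> bool" where
  "sph_tetra_vertices p \<longleftrightarrow>
     (\<forall>i<4. norm (p i) = 1) \<and> inj_on p {..<4} \<and> independent (p ` {..<4})"

definition sph_tetra :: "(nat \<Rightarrow> real^4) \<Rightarrow> (real^4) set" where
  "sph_tetra p = {x. norm x = 1 \<and>
      (\<exists>c::nat \<Rightarrow> real. (\<forall>i<4. c i \<ge> 0) \<and> x = (\<Sum>i<4. c i *\<^sub>R p i))}"

text \<open>v is the outer unit normal to the face opposite the vertex p i.\<close>
definition outer_normal :: "(nat \<Rightarrow> real^4) \<Rightarrow> nat \<Rightarrow> real^4 \<Rightarrow> bool" where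
  "outer_normal p i v \<longleftrightarrow> norm v = 1 \<and> (\<forall>j<4. j \<noteq> i \<longrightarrow> v \<bullet> p j = 0) \<and> v \<bullet> p i < 0"

definition edge_len :: "(nat \<Rightarrow> real^4) \<Rightarrow> nat \<Rightarrow> nat \<Rightarrow> real" where
  "edge_len p i j = arccos (p i \<bullet> p j)"

definition dihedral :: "(nat \<Rightarrow> real^4) \<Rightarrow> nat \<Rightarrow> nat \<Rightarrow> real" where
  "dihedral v i j = arccos (- (v i \<bullet> v j))"

text \<open>Z_2-symmetry: invariance under the rotation through angle pi about the axis
 through the midpoints of edges p0p1 and p2p3, i.e. the linear map of R^4 fixing
 the plane spanned by p0+p1 and p2+p3 pointwise and acting as -id (rotation by pi)
 on its orthogonal complement.\<close>
definition Z2_symmetric :: "(nat \<Rightarrow> real^4) \<Rightarrow> bool" where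
  "Z2_symmetric p \<longleftrightarrow>
     (\<exists>R :: real^4 \<Rightarrow> real^4. linear R \<and>
        (\<forall>x\<in>span {p 0 + p 1, p 2 + p 3}. R x = x) \<and>
        (\<forall>x. (\<forall>y\<in>span {p 0 + p 1, p 2 + p 3}. x \<bullet> y = 0) \<longrightarrow> R x = - x) \<and>
        R ` sph_tetra p = sph_tetra p)"

end

theory Submission
  imports Defs
begin

(* The half-turn R is an isometry fixing p0 + p1 and p2 + p3 and mapping the cone over the
   vertices into itself; this forces R to swap p0 <-> p1 and p2 <-> p3, so the Gram matrix of
   the vertices is determined by a = cos l_A, b = cos l_B, c = cos l_C and d = cos l_D.
   Adding and subtracting the equations that define the outer normals splits them into two
   2x2 systems with determinants P = (1+a)(1+d) - (b+c)^2 and Q = (1-a)(1-d) - (b-c)^2,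
   both positive by Cauchy-Schwarz. Solving them gives <v0,v1> = g(d) and <v2,v3> = g(a)
   for the Moebius map g(t) = ((1+t)Q - (1-t)P) / ((1+t)Q + (1-t)P), which is strictly
   increasing on [-1,1]. As cos D = -g(d), cos A = -g(a) and arccos is decreasing, the
   pairs (l_A, l_D) and (A, D) are ordered oppositely. *)

lemma independent4_coeffs:
  fixes q0 q1 q2 q3 :: "'a::real_vector"
  assumes "independent {q0, q1, q2, q3}" "distinct [q0, q1, q2, q3]"
    and "a0 *\<^sub>R q0 + a1 *\<^sub>R q1 + a2 *\<^sub>R q2 + a3 *\<^sub>R q3 = 0"
  shows "a0 = 0 \<and> a1 = 0 \<and> a2 = 0 \<and> a3 = 0"
proof -
  define c where "c v = (if v = q0 then a0 else if v = q1 then a1 else if v = q2 then a2 else a3)"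
    for v
  have ne: "q1 \<noteq> q0" "q2 \<noteq> q0" "q2 \<noteq> q1" "q3 \<noteq> q0" "q3 \<noteq> q1" "q3 \<noteq> q2"
    using assms(2) by auto
  have "(\<Sum>v\<in>{q0, q1, q2, q3}. c v *\<^sub>R v) = c q0 *\<^sub>R q0 + c q1 *\<^sub>R q1 + c q2 *\<^sub>R q2 + c q3 *\<^sub>R q3"
    using assms(2) by (simp add: add.assoc)
  also have "\<dots> = 0"
    using assms(3) ne by (simp add: c_def)
  finally have sum: "(\<Sum>v\<in>{q0, q1, q2, q3}. c v *\<^sub>R v) = 0" .
  have "c v = 0" if "v \<in> {q0, q1, q2, q3}" for v
    by (rule real_vector.independent_explicit_module[THEN iffD1, rule_format,
          OF assms(1) _ order_refl sum that]) simp
  from this[of q0] this[of q1] this[of q2] this[of q3] show ?thesis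
    using ne by (simp add: c_def)
qed

lemma span4_coords:
  assumes "x \<in> span {q0, q1, q2, q3}"
  obtains x0 x1 x2 x3 where "x = x0 *\<^sub>R q0 + x1 *\<^sub>R q1 + x2 *\<^sub>R q2 + x3 *\<^sub>R q3"
proof -
  obtain x0 x1 x2 x3 where "x - x0 *\<^sub>R q0 - x1 *\<^sub>R q1 - x2 *\<^sub>R q2 = x3 *\<^sub>R q3"
    using assms by (auto simp: span_breakdown_eq span_singleton diff_diff_eq)
  then show thesis
    by (intro that[of x0 x1 x2 x3]) (simp add: algebra_simps)
qed

lemma sph_tetra_vertices_basis:
  assumes "sph_tetra_vertices p"
  shows "independent {p 0, p 1, p 2, p 3}" "distinct [p 0, p 1, p 2, p 3]"
    and "span {p 0, p 1, p 2, p 3} = UNIV"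
proof -
  have image: "p ` {..<4} = {p 0, p 1, p 2, p 3}"
    by (auto simp: lessThan_nat_numeral)
  have inj: "inj_on p {..<4}" and indep: "independent (p ` {..<4})"
    using assms unfolding sph_tetra_vertices_def by auto
  then show "independent {p 0, p 1, p 2, p 3}"
    by (simp add: image)
  have "inj_on p {0, 1, 2, 3}"
    using inj by (rule inj_on_subset) auto
  then show "distinct [p 0, p 1, p 2, p 3]"
    using distinct_map[of p "[0, 1, 2, 3]"] by simp
  have "card (p ` {..<4}) = 4"
    using card_image[OF inj] by simp
  then have "UNIV \<subseteq> span (p ` {..<4})"
    by (intro card_ge_dim_independent[OF _ indep]) auto
  then show "span {p 0, p 1, p 2, p 3} = UNIV"
    by (auto simp: image)
qed

definition cone4 :: "'a::real_vector \<Rightarrow> 'a \<Rightarrow> 'a \<Rightarrow> 'a \<Rightarrow> 'a set"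
  where "cone4 q0 q1 q2 q3 = {c0 *\<^sub>R q0 + c1 *\<^sub>R q1 + c2 *\<^sub>R q2 + c3 *\<^sub>R q3 | c0 c1 c2 c3.
    c0 \<ge> 0 \<and> c1 \<ge> 0 \<and> c2 \<ge> 0 \<and> c3 \<ge> 0}"

lemma cone4_swap_pairs: "cone4 q2 q3 q0 q1 = cone4 q0 q1 q2 q3"
  unfolding cone4_def by (auto simp: ac_simps) (metis add.assoc add.commute)+

lemma sph_tetra_subset_cone4: "sph_tetra p \<subseteq> cone4 (p 0) (p 1) (p 2) (p 3)"
proof
  fix x
  assume "x \<in> sph_tetra p"
  then obtain c where c: "\<forall>i<4. c i \<ge> 0" "x = (\<Sum>i<4. c i *\<^sub>R p i)"
    unfolding sph_tetra_def by blast
  then have "x = c 0 *\<^sub>R p 0 + c 1 *\<^sub>R p 1 + c 2 *\<^sub>R p 2 + c 3 *\<^sub>R p 3"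
    by (simp add: lessThan_nat_numeral add_ac)
  moreover have "c 0 \<ge> 0" "c 1 \<ge> 0" "c 2 \<ge> 0" "c 3 \<ge> 0"
    using c(1) by simp_all
  ultimately show "x \<in> cone4 (p 0) (p 1) (p 2) (p 3)"
    unfolding cone4_def by blast
qed

lemma vertex_in_sph_tetra:
  assumes "sph_tetra_vertices p" "i < 4"
  shows "p i \<in> sph_tetra p"
proof -
  have "(\<Sum>j<4. (if j = i then 1 else 0) *\<^sub>R p j) = (\<Sum>j<4. if j = i then p j else 0)"
    by (rule sum.cong) auto
  also have "\<dots> = p i"
    using assms(2) by simp
  finally have "p i = (\<Sum>j<4. (if j = i then 1 else 0) *\<^sub>R p j)" ..
  then show ?thesis
    using assms unfolding sph_tetra_def sph_tetra_vertices_def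
    by (intro CollectI conjI exI[of _ "\<lambda>j. if j = i then 1 else 0"]) auto
qed

lemma reflection_through_span:
  fixes R :: "'a::euclidean_space \<Rightarrow> 'a"
  assumes "linear R" and "\<And>x. x \<in> span S \<Longrightarrow> R x = x"
    and "\<And>x. (\<forall>y\<in>span S. x \<bullet> y = 0) \<Longrightarrow> R x = - x"
  shows "x + R x \<in> span S" and "R x \<bullet> R y = x \<bullet> y"
proof -
  have decomp: "\<exists>e f. e \<in> span S \<and> (\<forall>y\<in>span S. f \<bullet> y = 0) \<and> z = e + f \<and> R z = e - f" for z
  proof -
    obtain e f where "e \<in> span S" "\<And>w. w \<in> span S \<Longrightarrow> orthogonal f w" "z = e + f"
      using orthogonal_subspace_decomp_exists[of S z] by metis
    then show ?thesis
      using assms by (auto simp: orthogonal_def linear_add)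
  qed
  obtain e f where x: "e \<in> span S" "\<forall>y\<in>span S. f \<bullet> y = 0" "x = e + f" "R x = e - f"
    using decomp by blast
  obtain e' f' where y: "e' \<in> span S" "\<forall>y\<in>span S. f' \<bullet> y = 0" "y = e' + f'" "R y = e' - f'"
    using decomp by blast
  show "x + R x \<in> span S"
    using x by (simp add: span_add)
  have "f \<bullet> e' = 0" "e \<bullet> f' = 0"
    using x y by (auto simp: inner_commute)
  then show "R x \<bullet> R y = x \<bullet> y"
    using x y by (simp add: inner_add_left inner_add_right inner_diff_left inner_diff_right)
qed

(* The coefficient of q1 in r0 is at most 1 because of r1, and at least 1 because it equals
   one plus the coefficient of q0. *)
lemma cone_pair_swap_eq:
  fixes q0 q1 q2 q3 :: "'a::real_vector"
  assumes "independent {q0, q1, q2, q3}" "distinct [q0, q1, q2, q3]"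
    and "r0 \<in> cone4 q0 q1 q2 q3" "r1 \<in> cone4 q0 q1 q2 q3"
    and "r0 + r1 = q0 + q1"
    and "q0 + r0 \<in> span {q0 + q1, q2 + q3}"
  shows "r0 = q1"
proof -
  obtain a0 a1 a2 a3 b0 b1 b2 b3 where
    r0: "r0 = a0 *\<^sub>R q0 + a1 *\<^sub>R q1 + a2 *\<^sub>R q2 + a3 *\<^sub>R q3" "a0 \<ge> 0" "a2 \<ge> 0" "a3 \<ge> 0"
    and r1: "r1 = b0 *\<^sub>R q0 + b1 *\<^sub>R q1 + b2 *\<^sub>R q2 + b3 *\<^sub>R q3" "b1 \<ge> 0" "b2 \<ge> 0" "b3 \<ge> 0"
    using assms(3,4) unfolding cone4_def by blast
  have coeffs: "(a0 + b0 - 1) *\<^sub>R q0 + (a1 + b1 - 1) *\<^sub>R q1 + (a2 + b2) *\<^sub>R q2 + (a3 + b3) *\<^sub>R q3 = 0"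
    using r0(1) r1(1) assms(5) by (simp add: algebra_simps)
  then have sum: "a1 + b1 = 1" "a2 = 0" "a3 = 0"
    using independent4_coeffs[OF assms(1,2) coeffs] r0 r1 by auto
  obtain k t where "q0 + r0 = k *\<^sub>R (q0 + q1) + t *\<^sub>R (q2 + q3)"
    using assms(6) by (auto simp: span_breakdown_eq span_singleton algebra_simps)
  then have coeffs': "(1 + a0 - k) *\<^sub>R q0 + (a1 - k) *\<^sub>R q1 + (a2 - t) *\<^sub>R q2 + (a3 - t) *\<^sub>R q3 = 0"
    using r0(1) by (simp add: algebra_simps)
  then have "a1 = 1 + a0"
    using independent4_coeffs[OF assms(1,2) coeffs'] by auto
  then have "a0 = 0" "a1 = 1"
    using sum r0(2) r1(2) by auto
  then show ?thesis
    using r0(1) sum by simp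
qed

lemma Z2_symmetric_inner_eqs:
  assumes "sph_tetra_vertices p" and "Z2_symmetric p"
  shows "p 0 \<bullet> p 2 = p 1 \<bullet> p 3 \<and> p 0 \<bullet> p 3 = p 1 \<bullet> p 2"
proof -
  note indep = sph_tetra_vertices_basis(1,2)[OF assms(1)]
  obtain R where lin: "linear R"
    and id_on: "\<And>x. x \<in> span {p 0 + p 1, p 2 + p 3} \<Longrightarrow> R x = x"
    and neg: "\<And>x. (\<forall>y\<in>span {p 0 + p 1, p 2 + p 3}. x \<bullet> y = 0) \<Longrightarrow> R x = - x"
    and img: "R ` sph_tetra p = sph_tetra p"
    using assms(2) unfolding Z2_symmetric_def by blast
  note reflection = reflection_through_span[OF lin id_on neg]
  have cone: "R (p i) \<in> cone4 (p 0) (p 1) (p 2) (p 3)" if "i < 4" for i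
    using vertex_in_sph_tetra[OF assms(1) that] img sph_tetra_subset_cone4 by blast
  have sum01: "R (p 0) + R (p 1) = p 0 + p 1" and sum23: "R (p 2) + R (p 3) = p 2 + p 3"
    using id_on[of "p 0 + p 1"] id_on[of "p 2 + p 3"]
    by (simp_all add: linear_add[OF lin] span_base)
  have R01: "R (p 0) = p 1"
    using cone_pair_swap_eq[OF indep cone cone sum01 reflection(1)] by simp
  have R23: "R (p 2) = p 3"
  proof (rule cone_pair_swap_eq)
    have "{p 2, p 3, p 0, p 1} = {p 0, p 1, p 2, p 3}"
      by auto
    then show "independent {p 2, p 3, p 0, p 1}" "distinct [p 2, p 3, p 0, p 1]"
      using indep by auto
    show "R (p 2) \<in> cone4 (p 2) (p 3) (p 0) (p 1)" "R (p 3) \<in> cone4 (p 2) (p 3) (p 0) (p 1)"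
      using cone[of 2] cone[of 3] by (simp_all only: cone4_swap_pairs)
    have "{p 2 + p 3, p 0 + p 1} = {p 0 + p 1, p 2 + p 3}"
      by auto
    then show "p 2 + R (p 2) \<in> span {p 2 + p 3, p 0 + p 1}"
      using reflection(1)[where x = "p 2"] by simp
  qed (rule sum23)
  have "R (p 1) = p 0" "R (p 3) = p 2"
    using sum01 sum23 R01 R23 by auto
  then show ?thesis
    using reflection(2)[where x = "p 0" and y = "p 2"] reflection(2)[where x = "p 0" and y = "p 3"]
      R01 R23 by simp
qed

(* For the vertices of a Z2-symmetric tetrahedron: a = cos l_A, b = cos l_B = cos l_E,
   c = cos l_C = cos l_F, d = cos l_D. *)
definition symmetric_gram ::
    "'a::real_inner \<Rightarrow> 'a \<Rightarrow> 'a \<Rightarrow> 'a \<Rightarrow> real \<Rightarrow> real \<Rightarrow> real \<Rightarrow> real \<Rightarrow> bool"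
  where "symmetric_gram q0 q1 q2 q3 a b c d \<longleftrightarrow>
    q0 \<bullet> q0 = 1 \<and> q1 \<bullet> q1 = 1 \<and> q2 \<bullet> q2 = 1 \<and> q3 \<bullet> q3 = 1 \<and>
    q0 \<bullet> q1 = a \<and> q2 \<bullet> q3 = d \<and> q0 \<bullet> q2 = b \<and> q1 \<bullet> q3 = b \<and> q0 \<bullet> q3 = c \<and> q1 \<bullet> q2 = c"

lemma symmetric_gram_swap_pairs:
  "symmetric_gram q0 q1 q2 q3 a b c d \<Longrightarrow> symmetric_gram q2 q3 q0 q1 d b c a"
  by (auto simp: symmetric_gram_def inner_commute)

lemma symmetric_gram_swap_within_pairs:
  "symmetric_gram q0 q1 q2 q3 a b c d \<Longrightarrow> symmetric_gram q1 q0 q3 q2 a b c d"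
  by (auto simp: symmetric_gram_def inner_commute)

lemma Z2_symmetric_gram:
  assumes "sph_tetra_vertices p" and "Z2_symmetric p"
  shows "symmetric_gram (p 0) (p 1) (p 2) (p 3)
    (p 0 \<bullet> p 1) (p 0 \<bullet> p 2) (p 0 \<bullet> p 3) (p 2 \<bullet> p 3)"
proof -
  have "p i \<bullet> p i = 1" if "i < 4" for i
    using assms(1) that unfolding sph_tetra_vertices_def by (simp add: norm_eq_1)
  then show ?thesis
    using Z2_symmetric_inner_eqs[OF assms] unfolding symmetric_gram_def by simp
qed

lemma symmetric_gram_abs_le_1:
  assumes "symmetric_gram q0 q1 q2 q3 a b c d"
  shows "\<bar>a\<bar> \<le> 1" and "\<bar>d\<bar> \<le> 1"
  using assms Cauchy_Schwarz_ineq2[of q0 q1] Cauchy_Schwarz_ineq2[of q2 q3]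
  unfolding symmetric_gram_def by (auto simp: norm_eq_1[symmetric])

lemma inner_square_less_of_not_collinear:
  fixes x y :: "'a::real_inner"
  assumes "y \<noteq> 0" and "\<And>t. x \<noteq> t *\<^sub>R y"
  shows "(x \<bullet> y)\<^sup>2 < (x \<bullet> x) * (y \<bullet> y)"
proof -
  define t where "t = (x \<bullet> y) / (y \<bullet> y)"
  have yy: "y \<bullet> y > 0"
    using assms(1) by simp
  have "0 < (x - t *\<^sub>R y) \<bullet> (x - t *\<^sub>R y)"
    using assms(2)[of t] by simp
  also have "\<dots> = x \<bullet> x - (x \<bullet> y)\<^sup>2 / (y \<bullet> y)"
    using yy by (simp add: t_def inner_diff_left inner_diff_right inner_commute power2_eq_square
        field_simps)
  finally show ?thesis
    using yy by (simp add: field_simps)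
qed

(* The two determinants are, up to a factor 4, the Gram determinants of q0 + q1, q2 + q3
   and of q0 - q1, q2 - q3. *)
lemma symmetric_gram_dets_pos:
  assumes "symmetric_gram q0 q1 q2 q3 a b c d"
    and "independent {q0, q1, q2, q3}" "distinct [q0, q1, q2, q3]"
  shows "(1 + a) * (1 + d) - (b + c)\<^sup>2 > 0" and "(1 - a) * (1 - d) - (b - c)\<^sup>2 > 0"
proof -
  have indep: "s0 = 0 \<and> s1 = 0 \<and> s2 = 0 \<and> s3 = 0"
    if "s0 *\<^sub>R q0 + s1 *\<^sub>R q1 + s2 *\<^sub>R q2 + s3 *\<^sub>R q3 = 0" for s0 s1 s2 s3
    using independent4_coeffs[OF assms(2,3) that] .
  have "((q0 + \<sigma> *\<^sub>R q1) \<bullet> (q2 + \<sigma> *\<^sub>R q3))\<^sup>2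
      < ((q0 + \<sigma> *\<^sub>R q1) \<bullet> (q0 + \<sigma> *\<^sub>R q1)) * ((q2 + \<sigma> *\<^sub>R q3) \<bullet> (q2 + \<sigma> *\<^sub>R q3))"
    if "\<sigma> = 1 \<or> \<sigma> = -1" for \<sigma> :: real
  proof (rule inner_square_less_of_not_collinear)
    show "q2 + \<sigma> *\<^sub>R q3 \<noteq> 0"
      using indep[of 0 0 1 \<sigma>] that by auto
    show "q0 + \<sigma> *\<^sub>R q1 \<noteq> t *\<^sub>R (q2 + \<sigma> *\<^sub>R q3)" for t
      using indep[of 1 \<sigma> "- t" "- t * \<sigma>"] by (auto simp: algebra_simps)
  qed
  from this[of 1] this[of "-1"] assms(1) show
    "(1 + a) * (1 + d) - (b + c)\<^sup>2 > 0" "(1 - a) * (1 - d) - (b - c)\<^sup>2 > 0"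
    by (auto simp: symmetric_gram_def inner_commute power2_eq_square algebra_simps)
qed

lemma symmetric_2x2_solve:
  fixes \<alpha> \<delta> e r s t :: real
  assumes "\<alpha> * s + e * t = r" and "e * s + \<delta> * t = 0" and "\<alpha> * \<delta> - e\<^sup>2 \<noteq> 0"
  shows "s = r * \<delta> / (\<alpha> * \<delta> - e\<^sup>2)"
proof -
  have "(\<alpha> * \<delta> - e\<^sup>2) * s = \<delta> * (\<alpha> * s + e * t) - e * (e * s + \<delta> * t)"
    by (simp add: power2_eq_square algebra_simps)
  also have "\<dots> = r * \<delta>"
    using assms(1,2) by simp
  finally have "(\<alpha> * \<delta> - e\<^sup>2) * s = r * \<delta>" .
  then show ?thesis
    using assms(3) by (simp add: field_simps)
qed

lemma symmetric_gram_normal_coeffs: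
  fixes q0 q1 q2 q3 v :: "'a::real_inner"
  assumes gram: "symmetric_gram q0 q1 q2 q3 a b c d"
    and P: "P = (1 + a) * (1 + d) - (b + c)\<^sup>2" "P \<noteq> 0"
    and Q: "Q = (1 - a) * (1 - d) - (b - c)\<^sup>2" "Q \<noteq> 0"
    and v: "v = x0 *\<^sub>R q0 + x1 *\<^sub>R q1 + x2 *\<^sub>R q2 + x3 *\<^sub>R q3"
      "v \<bullet> q1 = 0" "v \<bullet> q2 = 0" "v \<bullet> q3 = 0"
  shows "2 * x0 = (v \<bullet> q0) * ((1 + d) / P + (1 - d) / Q)"
    and "2 * x1 = (v \<bullet> q0) * ((1 + d) / P - (1 - d) / Q)"
proof -
  define m where "m = v \<bullet> q0"
  have G: "q0 \<bullet> q0 = 1" "q1 \<bullet> q1 = 1" "q2 \<bullet> q2 = 1" "q3 \<bullet> q3 = 1"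
    "q0 \<bullet> q1 = a" "q0 \<bullet> q2 = b" "q0 \<bullet> q3 = c" "q1 \<bullet> q2 = c" "q1 \<bullet> q3 = b" "q2 \<bullet> q3 = d"
    using gram unfolding symmetric_gram_def by auto
  have G': "q1 \<bullet> q0 = a" "q2 \<bullet> q0 = b" "q3 \<bullet> q0 = c" "q2 \<bullet> q1 = c" "q3 \<bullet> q1 = b" "q3 \<bullet> q2 = d"
    using G(5-10) by (simp_all only: inner_commute)
  have eqs: "x0 + a * x1 + b * x2 + c * x3 = m" "a * x0 + x1 + c * x2 + b * x3 = 0"
    "b * x0 + c * x1 + x2 + d * x3 = 0" "c * x0 + b * x1 + d * x2 + x3 = 0"
    using v unfolding m_def by (simp_all add: inner_add_left G G' mult.commute)
  \<comment> \<open>Sums and differences of the equations for q0, q1 and for q2, q3 give two 2x2 systems.\<close>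
  have "x0 + x1 = m * (1 + d) / P"
    unfolding P(1)
    by (rule symmetric_2x2_solve[where t = "x2 + x3"]) (use eqs P in \<open>simp_all add: algebra_simps\<close>)
  moreover have "x0 - x1 = m * (1 - d) / Q"
    unfolding Q(1)
    by (rule symmetric_2x2_solve[where t = "x2 - x3"]) (use eqs Q in \<open>simp_all add: algebra_simps\<close>)
  ultimately show "2 * x0 = m * ((1 + d) / P + (1 - d) / Q)"
    and "2 * x1 = m * ((1 + d) / P - (1 - d) / Q)"
    by (simp_all add: algebra_simps add_divide_distrib diff_divide_distrib)
qed

definition edge_normal_inner :: "real \<Rightarrow> real \<Rightarrow> real \<Rightarrow> real"
  where "edge_normal_inner P Q t = ((1 + t) / P - (1 - t) / Q) / ((1 + t) / P + (1 - t) / Q)"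

lemma edge_normal_inner_eq:
  assumes "P > 0" "Q > 0" "\<bar>t\<bar> \<le> 1"
  shows "edge_normal_inner P Q t = ((1 + t) * Q - (1 - t) * P) / ((1 + t) * Q + (1 - t) * P)"
    and "(1 + t) * Q + (1 - t) * P > 0"
proof -
  show pos: "(1 + t) * Q + (1 - t) * P > 0"
  proof (cases "t = 1")
    case False
    then have "(1 - t) * P > 0" "(1 + t) * Q \<ge> 0"
      using assms by auto
    then show ?thesis by linarith
  qed (use assms in simp)
  have "(1 + t) / P - (1 - t) / Q = ((1 + t) * Q - (1 - t) * P) / (P * Q)"
    "(1 + t) / P + (1 - t) / Q = ((1 + t) * Q + (1 - t) * P) / (P * Q)"
    using assms by (simp_all add: diff_frac_eq add_frac_eq mult.commute)
  then show "edge_normal_inner P Q t = ((1 + t) * Q - (1 - t) * P) / ((1 + t) * Q + (1 - t) * P)"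
    using assms unfolding edge_normal_inner_def by simp
qed

lemma edge_normal_inner_strict_mono:
  assumes "P > 0" "Q > 0"
  shows "strict_mono_on {-1..1} (edge_normal_inner P Q)"
proof (rule strict_mono_onI)
  fix s t :: real
  assume "s \<in> {-1..1}" "t \<in> {-1..1}" "s < t"
  then have st: "\<bar>s\<bar> \<le> 1" "\<bar>t\<bar> \<le> 1" "s < t"
    by auto
  define N D where "N x = (1 + x) * Q - (1 - x) * P" and "D x = (1 + x) * Q + (1 - x) * P" for x
  have eq: "edge_normal_inner P Q x = N x / D x" "D x > 0" if "\<bar>x\<bar> \<le> 1" for x
    using edge_normal_inner_eq[OF assms that] unfolding N_def D_def by auto
  have "N t * D s - N s * D t = 4 * P * Q * (t - s)"
    unfolding N_def D_def by (simp add: algebra_simps)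
  also have "\<dots> > 0"
    using assms st(3) by simp
  finally have "N s * D t < N t * D s"
    by simp
  then show "edge_normal_inner P Q s < edge_normal_inner P Q t"
    using eq[OF st(1)] eq[OF st(2)] by (simp add: pos_divide_less_eq pos_less_divide_eq mult.commute)
qed

lemma edge_normal_inner_bounded:
  assumes "P > 0" "Q > 0" "\<bar>t\<bar> \<le> 1"
  shows "\<bar>edge_normal_inner P Q t\<bar> \<le> 1"
proof -
  note eq = edge_normal_inner_eq[OF assms]
  have "\<bar>(1 + t) * Q - (1 - t) * P\<bar> \<le> (1 + t) * Q + (1 - t) * P"
    using assms by (intro abs_leI) (auto intro: mult_nonneg_nonneg)
  then show ?thesis
    unfolding eq(1) using eq(2) by simp
qed

lemma symmetric_gram_normals_inner:
  fixes q0 q1 q2 q3 v w :: "'a::real_inner" and d P Q :: real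
  defines "S \<equiv> (1 + d) / P + (1 - d) / Q" and "T \<equiv> (1 + d) / P - (1 - d) / Q"
  assumes gram: "symmetric_gram q0 q1 q2 q3 a b c d"
    and P: "P = (1 + a) * (1 + d) - (b + c)\<^sup>2" "P \<noteq> 0"
    and Q: "Q = (1 - a) * (1 - d) - (b - c)\<^sup>2" "Q \<noteq> 0"
    and v: "v \<in> span {q0, q1, q2, q3}" "v \<bullet> q1 = 0" "v \<bullet> q2 = 0" "v \<bullet> q3 = 0"
    and w: "w \<in> span {q0, q1, q2, q3}" "w \<bullet> q0 = 0" "w \<bullet> q2 = 0" "w \<bullet> q3 = 0"
  shows "2 * (v \<bullet> v) = (v \<bullet> q0)\<^sup>2 * S" and "2 * (w \<bullet> w) = (w \<bullet> q1)\<^sup>2 * S"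
    and "2 * (v \<bullet> w) = (v \<bullet> q0) * (w \<bullet> q1) * T"
proof -
  obtain x0 x1 x2 x3 where x: "v = x0 *\<^sub>R q0 + x1 *\<^sub>R q1 + x2 *\<^sub>R q2 + x3 *\<^sub>R q3"
    using span4_coords[OF v(1)] .
  have "w \<in> span {q1, q0, q3, q2}"
    using w(1) by (simp add: insert_commute)
  then obtain y0 y1 y2 y3 where y: "w = y1 *\<^sub>R q1 + y0 *\<^sub>R q0 + y3 *\<^sub>R q3 + y2 *\<^sub>R q2"
    by (rule span4_coords)
  have x0: "2 * x0 = (v \<bullet> q0) * S" and x1: "2 * x1 = (v \<bullet> q0) * T"
    using symmetric_gram_normal_coeffs[OF gram P Q x v(2-4)] unfolding S_def T_def by auto
  have y1: "2 * y1 = (w \<bullet> q1) * S"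
    using symmetric_gram_normal_coeffs[OF symmetric_gram_swap_within_pairs[OF gram] P Q y w(2,4,3)]
    unfolding S_def by auto
  have "v \<bullet> v = x0 * (v \<bullet> q0)"
    using arg_cong[where f = "inner v", OF x] v(2-4) by (simp add: inner_add_right)
  then show "2 * (v \<bullet> v) = (v \<bullet> q0)\<^sup>2 * S"
    using x0 by (simp add: power2_eq_square algebra_simps)
  have "w \<bullet> w = y1 * (w \<bullet> q1)"
    using arg_cong[where f = "inner w", OF y] w(2-4) by (simp add: inner_add_right)
  then show "2 * (w \<bullet> w) = (w \<bullet> q1)\<^sup>2 * S"
    using y1 by (simp add: power2_eq_square algebra_simps)
  have "q0 \<bullet> w = 0" "q2 \<bullet> w = 0" "q3 \<bullet> w = 0"
    using w(2-4) by (simp_all add: inner_commute)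
  then have "v \<bullet> w = x1 * (q1 \<bullet> w)"
    using arg_cong[where f = "\<lambda>u. inner u w", OF x] by (simp add: inner_add_left)
  then show "2 * (v \<bullet> w) = (v \<bullet> q0) * (w \<bullet> q1) * T"
    using x1 by (simp add: inner_commute[of q1 w] algebra_simps)
qed

lemma unit_normals_inner:
  fixes q0 q1 q2 q3 v w :: "'a::real_inner"
  assumes gram: "symmetric_gram q0 q1 q2 q3 a b c d"
    and P: "P = (1 + a) * (1 + d) - (b + c)\<^sup>2" "P > 0"
    and Q: "Q = (1 - a) * (1 - d) - (b - c)\<^sup>2" "Q > 0"
    and v: "v \<in> span {q0, q1, q2, q3}" "v \<bullet> v = 1" "v \<bullet> q0 < 0"
      "v \<bullet> q1 = 0" "v \<bullet> q2 = 0" "v \<bullet> q3 = 0"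
    and w: "w \<in> span {q0, q1, q2, q3}" "w \<bullet> w = 1" "w \<bullet> q1 < 0"
      "w \<bullet> q0 = 0" "w \<bullet> q2 = 0" "w \<bullet> q3 = 0"
  shows "v \<bullet> w = edge_normal_inner P Q d"
proof -
  define S T where "S = (1 + d) / P + (1 - d) / Q" and "T = (1 + d) / P - (1 - d) / Q"
  define m n where "m = v \<bullet> q0" and "n = w \<bullet> q1"
  note inners = symmetric_gram_normals_inner[OF gram P(1) _ Q(1) _ v(1,4-6) w(1,4-6)]
  have mS: "m\<^sup>2 * S = 2" and nS: "n\<^sup>2 * S = 2" and vw: "2 * (v \<bullet> w) = m * n * T"
    using inners v(2) w(2) P(2) Q(2) unfolding m_def n_def S_def T_def by auto
  have "m < 0" "n < 0"
    using v(3) w(3) unfolding m_def n_def by auto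
  moreover have "m\<^sup>2 = n\<^sup>2"
    using mS nS by (metis mult_cancel_right zero_neq_numeral mult_zero_left)
  ultimately have "m = n"
    by (simp add: power2_eq_iff)
  then have "2 * ((v \<bullet> w) * S) = m\<^sup>2 * S * T"
    using vw by (simp add: power2_eq_square algebra_simps)
  then have "(v \<bullet> w) * S = T"
    using mS by simp
  moreover have "S \<noteq> 0"
    using mS by auto
  ultimately show ?thesis
    unfolding edge_normal_inner_def S_def T_def by (simp add: eq_divide_eq)
qed

lemma arccos_neg_edge_normal_inner_iff:
  assumes "P > 0" "Q > 0" "\<bar>a\<bar> \<le> 1" "\<bar>d\<bar> \<le> 1"
  shows "(arccos a = arccos d
          \<longleftrightarrow> arccos (- edge_normal_inner P Q a) = arccos (- edge_normal_inner P Q d))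
       \<and> (arccos a > arccos d
          \<longleftrightarrow> arccos (- edge_normal_inner P Q a) < arccos (- edge_normal_inner P Q d))"
proof -
  note mono = edge_normal_inner_strict_mono[OF assms(1,2)]
  have ad: "a \<in> {-1..1}" "d \<in> {-1..1}"
    using assms(3,4) by auto
  have bounded: "\<bar>- edge_normal_inner P Q t\<bar> \<le> 1" if "\<bar>t\<bar> \<le> 1" for t
    using edge_normal_inner_bounded[OF assms(1,2) that] by simp
  show ?thesis
    using arccos_eq_iff arccos_less_mono bounded assms(3,4)
      strict_mono_on_eq[OF mono ad] strict_mono_on_less[OF mono ad(2,1)]
    by (smt (verit))
qed

theorem lemma1:
  fixes p v :: "nat \<Rightarrow> real^4"
  assumes "sph_tetra_vertices p"
    and "\<And>i. i < 4 \<Longrightarrow> outer_normal p i (v i)"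
    and "Z2_symmetric p"
  shows "(edge_len p 0 1 = edge_len p 2 3 \<longleftrightarrow> dihedral v 2 3 = dihedral v 0 1)
       \<and> (edge_len p 0 1 > edge_len p 2 3 \<longleftrightarrow> dihedral v 2 3 < dihedral v 0 1)"
proof -
  define a b c d where "a = p 0 \<bullet> p 1" and "b = p 0 \<bullet> p 2" and "c = p 0 \<bullet> p 3"
    and "d = p 2 \<bullet> p 3"
  define P Q where "P = (1 + a) * (1 + d) - (b + c)\<^sup>2" and "Q = (1 - a) * (1 - d) - (b - c)\<^sup>2"
  have gram: "symmetric_gram (p 0) (p 1) (p 2) (p 3) a b c d"
    unfolding a_def b_def c_def d_def using Z2_symmetric_gram[OF assms(1,3)] .
  have PQ: "P > 0" "Q > 0"
    using symmetric_gram_dets_pos[OF gram sph_tetra_vertices_basis(1,2)[OF assms(1)]]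
    unfolding P_def Q_def by auto
  have PQ_swap: "P = (1 + d) * (1 + a) - (b + c)\<^sup>2" "Q = (1 - d) * (1 - a) - (b - c)\<^sup>2"
    unfolding P_def Q_def by (simp_all add: algebra_simps)
  have normal: "v i \<in> span {p 0, p 1, p 2, p 3}" "v i \<bullet> v i = 1" "v i \<bullet> p i < 0"
    "\<And>j. j < 4 \<Longrightarrow> j \<noteq> i \<Longrightarrow> v i \<bullet> p j = 0" if "i < 4" for i
    using assms(2)[OF that] sph_tetra_vertices_basis(3)[OF assms(1)]
    unfolding outer_normal_def by (auto simp: norm_eq_1)
  \<comment> \<open>Faces 0 and 1 meet along p2 p3, faces 2 and 3 along p0 p1.\<close>
  have "v 0 \<bullet> v 1 = edge_normal_inner P Q d"
    using normal[of 0] normal[of 1]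
    by (intro unit_normals_inner[OF gram P_def PQ(1) Q_def PQ(2)]) simp_all
  moreover have "v 2 \<bullet> v 3 = edge_normal_inner P Q a"
    using normal[of 2] normal[of 3]
    by (intro unit_normals_inner[OF symmetric_gram_swap_pairs[OF gram] PQ_swap(1) PQ(1) PQ_swap(2) PQ(2)])
      (simp_all add: insert_commute)
  ultimately show ?thesis
    using arccos_neg_edge_normal_inner_iff[OF PQ symmetric_gram_abs_le_1[OF gram]]
    unfolding edge_len_def dihedral_def a_def d_def by simp
qed

end
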